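(* Let $\phi:\mathcal K_2\to\mathbb R^k$ be additive. Then $\phi(\mathcal P_2)=\phi(\mathcal P_{2,3k})$. If, moreover, $\phi$ is continuous (with respect to the Hausdorff metric on $\mathcal K_2$), then $\overline{\phi(\mathcal K_2)}=\overline{\phi(\mathcal P_{2,3k})}$, the closures taken in $\mathbb R^k$.
   Context: $\mathcal K_2$ is the set of nonempty compact convex subsets of $\mathbb R^2$, $\mathcal P_2\subset\mathcal K_2$ the set of convex polygons (convex hulls of finite nonempty sets, including segments and points), and $\mathcal P_{2,m}$ the set of those with at most $m$ vertices. A map $\phi:\mathcal K_2\to\mathbb R^k$ is additive if $\phi(\alpha K+\beta L)=\alpha\phi(K)+\beta\phi(L)$ for all $K,L\in\mathcal K_2$ and $\alpha,\beta\ge0$ (Minkowski sum and dilation). *)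

theory Defs
  imports "HOL-Analysis.Analysis"
begin

definition convex_bodies :: "(real^2) set set" where
  "convex_bodies = {K. K \<noteq> {} \<and> compact K \<and> convex K}"

definition polygons :: "(real^2) set set" where
  "polygons = {convex hull S | S. finite S \<and> S \<noteq> {}}"

definition vertices :: "(real^2) set \<Rightarrow> (real^2) set" where
  "vertices P = {x. x extreme_point_of P}"

definition polygons_le :: "nat \<Rightarrow> (real^2) set set" where
  "polygons_le m = {P \<in> polygons. card (vertices P) \<le> m}"

definition mink_comb :: "real \<Rightarrow> (real^2) set \<Rightarrow> real \<Rightarrow> (real^2) set \<Rightarrow> (real^2) set" where
  "mink_comb \<alpha> K \<beta> L = {\<alpha> *\<^sub>R x + \<beta> *\<^sub>R y | x y. x \<in> K \<and> y \<in> L}"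

definition additive_on_bodies :: "((real^2) set \<Rightarrow> real^'k) \<Rightarrow> bool" where
  "additive_on_bodies \<phi> \<longleftrightarrow>
     (\<forall>K\<in>convex_bodies. \<forall>L\<in>convex_bodies. \<forall>\<alpha>\<ge>0. \<forall>\<beta>\<ge>0.
        \<phi> (mink_comb \<alpha> K \<beta> L) = \<alpha> *\<^sub>R \<phi> K + \<beta> *\<^sub>R \<phi> L)"

text \<open>Hausdorff distance between nonempty bounded sets.\<close>
definition hausdorff_dist :: "(real^2) set \<Rightarrow> (real^2) set \<Rightarrow> real" where
  "hausdorff_dist A B = max (SUP a\<in>A. infdist a B) (SUP b\<in>B. infdist b A)"

definition hausdorff_continuous :: "((real^2) set \<Rightarrow> real^'k) \<Rightarrow> bool" where
  "hausdorff_continuous \<phi> \<longleftrightarrow>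
     (\<forall>K\<in>convex_bodies. \<forall>e>0. \<exists>d>0. \<forall>L\<in>convex_bodies.
        hausdorff_dist K L < d \<longrightarrow> dist (\<phi> L) (\<phi> K) < e)"

end

theory Submission
  imports Defs
begin

text \<open>
  A convex polygon is a translate of the convex hull of the closed walk along its edge vectors
  \<open>e\<^sub>j\<close>. Rescaling the edges by weights \<open>m\<^sub>j \<ge> 0\<close> with \<open>\<Sum> m\<^sub>j e\<^sub>j = 0\<close> gives convex sets
  \<open>W(m)\<close> whose support function in every direction is attained at a vertex index independent of
  \<open>m\<close>, because the edge directions turn monotonically. Hence \<open>m \<mapsto> W(m)\<close> is Minkowski linear
  and \<open>m \<mapsto> \<phi>(W(m))\<close> is additive on this cone of weights. As in Caratheodory's theorem, while
  more than \<open>k + 2\<close> weights are positive, the two-dimensional constraint and the \<open>k\<close> coordinates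
  of \<open>\<phi>\<close> leave a direction in which the weights can be moved without changing \<open>\<phi>(W(m))\<close>, until
  a weight vanishes. This yields a polygon with at most \<open>k + 2 \<le> 3k\<close> vertices and the same
  value. The statement about closures follows by approximating convex bodies by polygons in the
  Hausdorff metric.
\<close>

section \<open>Directions in the plane\<close>

definition dir :: "real \<Rightarrow> real^2" where
  "dir t = vector [cos t, sin t]"

lemma dir_nth [simp]: "dir t $ 1 = cos t" "dir t $ 2 = sin t"
  by (simp_all add: dir_def)

lemma dir_add_2pi [simp]: "dir (t + 2 * pi) = dir t"
  by (simp add: dir_def)

lemma dir_add_pi: "dir (t + pi) = - dir t"
  by (simp add: vec_eq_iff forall_2)

lemma sin_diff_dir_relation:
  "sin (b - c) *\<^sub>R dir a + sin (c - a) *\<^sub>R dir b + sin (a - b) *\<^sub>R dir c = 0"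
  by (simp add: vec_eq_iff forall_2 sin_diff algebra_simps)

lemma polar_decomposition:
  fixes u :: "real^2"
  assumes "u \<noteq> 0"
  obtains r t where "0 < r" "0 \<le> t" "t < 2 * pi" "u = r *\<^sub>R dir t"
proof -
  define r where "r = norm u"
  have r: "0 < r" using assms by (simp add: r_def)
  have sq: "(u$1)\<^sup>2 + (u$2)\<^sup>2 = r\<^sup>2"
    by (simp add: r_def norm_eq_sqrt_inner inner_vec_def UNIV_2 power2_eq_square)
  have "(u$1 / r)\<^sup>2 + (u$2 / r)\<^sup>2 = ((u$1)\<^sup>2 + (u$2)\<^sup>2) / r\<^sup>2"
    by (simp add: power_divide add_divide_distrib)
  then have "(u$1 / r)\<^sup>2 + (u$2 / r)\<^sup>2 = 1"
    using r by (simp add: sq)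
  then obtain t where t: "0 \<le> t" "t < 2 * pi" "u$1 / r = cos t" "u$2 / r = sin t"
    by (rule sincos_total_2pi)
  then have "u = r *\<^sub>R dir t"
    using r by (auto simp: vec_eq_iff forall_2 field_simps)
  with r t show thesis by (intro that)
qed

text \<open>By the sine relation, \<open>dir \<psi>\<close> is a nonnegative combination of \<open>dir f\<^sub>2\<close> and
  \<open>- dir f\<^sub>1\<close>.\<close>

lemma inner_dir_le_between:
  assumes "f1 < f2" "f2 - f1 < pi" "f2 \<le> \<psi>" "\<psi> \<le> f1 + pi"
    and "inner (dir f1) y \<le> inner (dir f1) x" "inner (dir f2) x \<le> inner (dir f2) y"
  shows "inner (dir \<psi>) x \<le> inner (dir \<psi>) y"
proof -
  let ?d = "y - x"
  have pos: "0 < sin (f2 - f1)"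
    using assms by (intro sin_gt_zero) auto
  have "sin (f2 - f1) * inner (dir \<psi>) ?d
      = sin (\<psi> - f1) * inner (dir f2) ?d + sin (\<psi> - f2) * - inner (dir f1) ?d"
    using arg_cong[OF sin_diff_dir_relation[of f2 \<psi> f1], of "\<lambda>v. inner v ?d"]
    by (simp add: inner_add_left sin_diff algebra_simps)
  also have "\<dots> \<ge> 0"
    using assms by (intro add_nonneg_nonneg mult_nonneg_nonneg sin_ge_zero)
      (auto simp: inner_diff_right)
  finally have "0 \<le> inner (dir \<psi>) ?d"
    using pos by (simp add: zero_le_mult_iff)
  then show ?thesis by (simp add: inner_diff_right)
qed

lemma inner_dir_le_opposite:
  assumes "f1 < f2" "f2 - f1 < pi" "\<psi> \<le> f1" "f2 \<le> \<psi> + pi"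
    and "inner (dir f1) y \<le> inner (dir f1) x" "inner (dir f2) x \<le> inner (dir f2) y"
  shows "inner (dir \<psi>) y \<le> inner (dir \<psi>) x"
  using inner_dir_le_between[of f1 f2 "\<psi> + pi" y x] assms by (simp add: dir_add_pi)

section \<open>Unimodal partial sums\<close>

lemma sum_lessThan_le_unimodal:
  fixes f :: "nat \<Rightarrow> real"
  assumes p: "p \<le> l"
    and up: "\<And>j. p \<le> j \<Longrightarrow> j < c \<Longrightarrow> 0 \<le> f j"
    and down: "\<And>j. c \<le> j \<Longrightarrow> j < l \<Longrightarrow> f j \<le> 0"
  shows "(\<Sum>j<l. f j) \<le> (\<Sum>j<c. f j)"
proof (cases "l \<le> c")
  case True
  then show ?thesis
    using p up by (intro sum_mono2) auto
next
  case False
  have "(\<Sum>j<l. f j) = (\<Sum>j\<in>{c..<l}. f j) + (\<Sum>j<c. f j)"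
    using False by (subst sum.subset_diff[of "{..<c}"]) (auto intro!: sum.cong)
  also have "(\<Sum>j\<in>{c..<l}. f j) \<le> 0"
    using down by (intro sum_nonpos) auto
  finally show ?thesis by simp
qed

lemma sum_lessThan_mod_period:
  fixes f :: "nat \<Rightarrow> 'a::comm_monoid_add"
  assumes period: "\<And>j. f (j + N) = f j" and zero: "(\<Sum>j<N. f j) = 0"
  shows "(\<Sum>j<l. f j) = (\<Sum>j<l mod N. f j)"
proof -
  have shift: "(\<Sum>j<l + N. f j) = (\<Sum>j<l. f j)" for l
    by (induction l) (simp_all add: zero period)
  have "(\<Sum>j<r + q * N. f j) = (\<Sum>j<r. f j)" for r q
  proof (induction q)
    case (Suc q)
    then show ?case
      using shift[of "r + q * N"] by (simp add: ac_simps)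
  qed simp
  from this[of "l mod N" "l div N"] show ?thesis by simp
qed

text \<open>Shifting \<open>l\<close> by a period does not change the partial sum, so \<open>l\<close> can be moved into the
  window \<open>[a, a + N - 1]\<close>, where the partial sums increase up to \<open>c\<close> and decrease after it.\<close>

lemma sum_lessThan_le_periodic_unimodal:
  fixes f :: "nat \<Rightarrow> real"
  assumes period: "\<And>j. f (j + N) = f j" and zero: "(\<Sum>j<N. f j) = 0"
    and "a \<le> N" "a \<le> c"
    and up: "\<And>j. a \<le> j \<Longrightarrow> j < c \<Longrightarrow> 0 \<le> f j"
    and down: "\<And>j. c \<le> j \<Longrightarrow> j < a + N - 1 \<Longrightarrow> f j \<le> 0"
    and "l < N"
  shows "(\<Sum>j<l. f j) \<le> (\<Sum>j<c mod N. f j)"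
proof -
  define l' where "l' = (if a \<le> l then l else l + N)"
  have "l' mod N = l" "a \<le> l'" "l' \<le> a + N - 1"
    using \<open>l < N\<close> \<open>a \<le> N\<close> by (auto simp: l'_def)
  then have "(\<Sum>j<l. f j) = (\<Sum>j<l'. f j)"
    using sum_lessThan_mod_period[OF period zero, of l'] by simp
  also have "\<dots> \<le> (\<Sum>j<c. f j)"
    using \<open>a \<le> l'\<close> \<open>l' \<le> a + N - 1\<close> up down by (intro sum_lessThan_le_unimodal) auto
  also have "\<dots> = (\<Sum>j<c mod N. f j)"
    by (rule sum_lessThan_mod_period[OF period zero])
  finally show ?thesis .
qed

lemma exists_sign_change_index:
  fixes f :: "nat \<Rightarrow> real"
  assumes "a < b"
    and up: "\<And>j. a \<le> j \<Longrightarrow> Suc j < b \<Longrightarrow> 0 \<le> f j"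
    and down: "\<And>j. b \<le> j \<Longrightarrow> j < r \<Longrightarrow> f j \<le> 0"
  obtains c where "a \<le> c" "\<And>j. a \<le> j \<Longrightarrow> j < c \<Longrightarrow> 0 \<le> f j" "\<And>j. c \<le> j \<Longrightarrow> j < r \<Longrightarrow> f j \<le> 0"
proof (cases "0 \<le> f (b - 1)")
  case True
  show thesis
  proof (rule that[of b])
    show "0 \<le> f j" if "a \<le> j" "j < b" for j
    proof (cases "Suc j < b")
      case False
      with that(2) have "j = b - 1"
        by simp
      with True show ?thesis
        by simp
    qed (rule up[OF that(1)])
  qed (use \<open>a < b\<close> down in auto)
next
  case False
  show thesis
  proof (rule that[of "b - 1"])
    show "f j \<le> 0" if "b - 1 \<le> j" "j < r" for j
    proof (cases "b \<le> j")
      case False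
      with that(1) have "j = b - 1"
        by simp
      with False show ?thesis
        using \<open>\<not> 0 \<le> f (b - 1)\<close> by simp
    qed (rule down[OF _ that(2)])
  qed (use \<open>a < b\<close> up in auto)
qed

section \<open>Closed walks and their convex hulls\<close>

definition walk :: "(nat \<Rightarrow> 'a::real_vector) \<Rightarrow> (nat \<Rightarrow> real) \<Rightarrow> nat \<Rightarrow> 'a" where
  "walk e m l = (\<Sum>j<l. m j *\<^sub>R e j)"

definition closed_weights :: "(nat \<Rightarrow> 'a::real_vector) \<Rightarrow> nat \<Rightarrow> (nat \<Rightarrow> real) set" where
  "closed_weights e N = {m. (\<forall>j<N. 0 \<le> m j) \<and> walk e m N = 0}"

definition weight_support :: "nat \<Rightarrow> (nat \<Rightarrow> real) \<Rightarrow> nat set" where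
  "weight_support N m = {j. j < N \<and> m j \<noteq> 0}"

text \<open>For the edge vectors \<open>e\<close> of a polygon and unit weights this is a translate of the polygon;
  other closed weights rescale its edges.\<close>

definition walk_hull :: "(nat \<Rightarrow> real^2) \<Rightarrow> nat \<Rightarrow> (nat \<Rightarrow> real) \<Rightarrow> (real^2) set" where
  "walk_hull e N m = convex hull (walk e m ` {..<N})"

definition uniform_support :: "(nat \<Rightarrow> 'a::real_inner) \<Rightarrow> nat \<Rightarrow> bool" where
  "uniform_support e N \<longleftrightarrow>
     (\<forall>u. \<exists>l<N. \<forall>m\<in>closed_weights e N. \<forall>l'<N. inner u (walk e m l') \<le> inner u (walk e m l))"

lemma walk_lincomb: "walk e (\<lambda>j. a * m j + b * m' j) l = a *\<^sub>R walk e m l + b *\<^sub>R walk e m' l"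
  by (simp add: walk_def scaleR_add_left sum.distrib scaleR_sum_right)

lemma walk_sum_lincomb: "walk e (\<lambda>j. \<Sum>l\<in>L. c l * v l j) n = (\<Sum>l\<in>L. c l *\<^sub>R walk e (v l) n)"
  unfolding walk_def scaleR_sum_left scaleR_sum_right by (subst sum.swap) simp

lemma closed_weights_lincomb:
  assumes "m \<in> closed_weights e N" "m' \<in> closed_weights e N" "0 \<le> a" "0 \<le> b"
  shows "(\<lambda>j. a * m j + b * m' j) \<in> closed_weights e N"
  using assms by (simp add: closed_weights_def walk_lincomb)

lemma walk_eq_sum_support:
  assumes "l \<le> N"
  shows "walk e m l = (\<Sum>j\<in>weight_support N m \<inter> {..<l}. m j *\<^sub>R e j)"
  unfolding walk_def using assms
  by (intro sum.mono_neutral_right) (auto simp: weight_support_def)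

lemma walk_in_image_Suc_support:
  assumes m: "m \<in> closed_weights e N" and "weight_support N m \<noteq> {}" "l < N"
  shows "walk e m l \<in> (\<lambda>j. walk e m (Suc j)) ` weight_support N m"
proof -
  define S where "S = weight_support N m"
  have S: "finite S" "S \<subseteq> {..<N}" "S \<noteq> {}"
    using assms by (auto simp: S_def weight_support_def)
  show ?thesis
  proof (cases "S \<inter> {..<l} = {}")
    case True
    have "S \<inter> {..<Suc (Max S)} = S \<inter> {..<N}"
      using S by (auto simp: less_Suc_eq_le)
    moreover have "Suc (Max S) \<le> N"
      using S Max_in[of S] by (auto simp: Suc_le_eq)
    ultimately have "walk e m (Suc (Max S)) = walk e m N"
      using walk_eq_sum_support[of "Suc (Max S)" N e m] walk_eq_sum_support[of N N e m]
      by (simp add: S_def)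
    also have "\<dots> = walk e m l"
      using m True \<open>l < N\<close> walk_eq_sum_support[of l N e m] by (simp add: closed_weights_def S_def)
    finally show ?thesis
      using S Max_in[of S] by (metis S_def image_eqI)
  next
    case False
    define j1 where "j1 = Max (S \<inter> {..<l})"
    have j1: "j1 \<in> S" "j1 < l"
      using Max_in[of "S \<inter> {..<l}"] S False by (auto simp: j1_def)
    have "S \<inter> {..<Suc j1} = S \<inter> {..<l}"
      using j1 S Max_ge[of "S \<inter> {..<l}"] by (fastforce simp: j1_def)
    then have "walk e m l = walk e m (Suc j1)"
      using j1 \<open>l < N\<close> walk_eq_sum_support[of l N e m] walk_eq_sum_support[of "Suc j1" N e m]
      by (simp add: S_def)
    then show ?thesis
      using j1 by (auto simp: S_def)
  qed
qed

lemma card_walk_image_le: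
  assumes m: "m \<in> closed_weights e N"
  shows "card (walk e m ` {..<N}) \<le> max 1 (card (weight_support N m))"
proof (cases "weight_support N m = {}")
  case True
  have "walk e m l = 0" if "l < N" for l
    using True walk_eq_sum_support[of l N e m] that by simp
  then have "walk e m ` {..<N} \<subseteq> {0}"
    by auto
  from card_mono[OF _ this] have "card (walk e m ` {..<N}) \<le> 1"
    by simp
  then show ?thesis
    by simp
next
  case False
  have fin: "finite (weight_support N m)"
    by (simp add: weight_support_def)
  have "card (walk e m ` {..<N}) \<le> card ((\<lambda>j. walk e m (Suc j)) ` weight_support N m)"
    using walk_in_image_Suc_support[OF m False] fin by (intro card_mono) auto
  also have "\<dots> \<le> card (weight_support N m)"
    using fin by (intro card_image_le)
  finally show ?thesis
    by simp
qed

lemma convex_mink_comb: "convex A \<Longrightarrow> convex B \<Longrightarrow> convex (mink_comb a A b B)"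
proof -
  assume "convex A" "convex B"
  then have "convex (\<Union>x\<in>(*\<^sub>R) a ` A. \<Union>y\<in>(*\<^sub>R) b ` B. {x + y})"
    by (intro convex_sums convex_scaling)
  moreover have "(\<Union>x\<in>(*\<^sub>R) a ` A. \<Union>y\<in>(*\<^sub>R) b ` B. {x + y}) = mink_comb a A b B"
    unfolding mink_comb_def by auto
  ultimately show ?thesis
    by simp
qed

lemma inner_le_on_convex_hull:
  assumes "x \<in> convex hull S" "\<And>s. s \<in> S \<Longrightarrow> inner u s \<le> c"
  shows "inner u x \<le> c"
proof -
  have "convex hull S \<subseteq> {x. inner u x \<le> c}"
    using assms(2) convex_halfspace_le by (intro hull_minimal) auto
  then show ?thesis
    using assms(1) by auto
qed

text \<open>Under a uniform support index, the support function of \<open>walk_hull e N m\<close> in any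
  direction is \<open>inner u (walk e m l)\<close> for one \<open>l\<close> serving all weights, so it is linear in \<open>m\<close>.\<close>

lemma mink_comb_walk_hull_subset:
  assumes uniform: "uniform_support e N"
    and m: "m \<in> closed_weights e N" and m': "m' \<in> closed_weights e N" and "0 \<le> a" "0 \<le> b"
  shows "mink_comb a (walk_hull e N m) b (walk_hull e N m') \<subseteq> walk_hull e N (\<lambda>j. a * m j + b * m' j)"
    (is "_ \<subseteq> walk_hull e N ?mm")
proof
  fix z assume "z \<in> mink_comb a (walk_hull e N m) b (walk_hull e N m')"
  then obtain x y where z: "z = a *\<^sub>R x + b *\<^sub>R y"
    and x: "x \<in> walk_hull e N m" and y: "y \<in> walk_hull e N m'"
    unfolding mink_comb_def by auto
  show "z \<in> walk_hull e N ?mm"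
  proof (rule ccontr)
    assume z_notin: "z \<notin> walk_hull e N ?mm"
    have "closed (walk_hull e N ?mm)"
      unfolding walk_hull_def by (simp add: compact_imp_closed compact_convex_hull finite_imp_compact)
    moreover have "convex (walk_hull e N ?mm)"
      unfolding walk_hull_def by simp
    ultimately obtain c d where cd: "inner c z < d" "\<And>x. x \<in> walk_hull e N ?mm \<Longrightarrow> d < inner c x"
      using separating_hyperplane_closed_point[OF _ _ z_notin] by blast
    obtain l where "l < N"
      and l: "\<forall>\<mu>\<in>closed_weights e N. \<forall>l'<N. inner (- c) (walk e \<mu> l') \<le> inner (- c) (walk e \<mu> l)"
      using uniform unfolding uniform_support_def by blast
    have "inner (- c) x \<le> inner (- c) (walk e m l)"
      using x unfolding walk_hull_def by (rule inner_le_on_convex_hull) (use l m in auto)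
    moreover have "inner (- c) y \<le> inner (- c) (walk e m' l)"
      using y unfolding walk_hull_def by (rule inner_le_on_convex_hull) (use l m' in auto)
    ultimately have "inner (- c) z \<le> inner (- c) (walk e ?mm l)"
      unfolding z walk_lincomb using \<open>0 \<le> a\<close> \<open>0 \<le> b\<close>
      by (simp add: inner_add_right add_mono mult_left_mono del: inner_minus_left)
    moreover have "walk e ?mm l \<in> walk_hull e N ?mm"
      unfolding walk_hull_def using \<open>l < N\<close> by (auto intro: hull_inc)
    ultimately show False
      using cd by fastforce
  qed
qed

lemma walk_hull_lincomb:
  assumes uniform: "uniform_support e N"
    and m: "m \<in> closed_weights e N" and m': "m' \<in> closed_weights e N" and "0 \<le> a" "0 \<le> b"
  shows "walk_hull e N (\<lambda>j. a * m j + b * m' j) = mink_comb a (walk_hull e N m) b (walk_hull e N m')"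
proof
  let ?mm = "\<lambda>j. a * m j + b * m' j"
  show "walk_hull e N ?mm \<subseteq> mink_comb a (walk_hull e N m) b (walk_hull e N m')"
    unfolding walk_hull_def
  proof (rule hull_minimal)
    show "walk e ?mm ` {..<N} \<subseteq> mink_comb a (convex hull walk e m ` {..<N}) b (convex hull walk e m' ` {..<N})"
      unfolding mink_comb_def walk_lincomb by (auto intro!: hull_inc)
    show "convex (mink_comb a (convex hull walk e m ` {..<N}) b (convex hull walk e m' ` {..<N}))"
      by (intro convex_mink_comb convex_convex_hull)
  qed
  show "mink_comb a (walk_hull e N m) b (walk_hull e N m') \<subseteq> walk_hull e N ?mm"
    by (rule mink_comb_walk_hull_subset) fact+
qed

section \<open>Support sequences of convex polygons\<close>

text \<open>\<open>X\<close> runs periodically through the vertices of a convex polygon in counterclockwise order,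
  possibly with repetitions: \<open>X j\<close> is a vertex maximising the direction \<open>\<theta> j\<close>.\<close>

locale support_sequence =
  fixes N :: nat and \<theta> :: "nat \<Rightarrow> real" and X :: "nat \<Rightarrow> real^2"
  assumes N_pos: "0 < N"
    and \<theta>_less_Suc: "\<And>j. \<theta> j < \<theta> (Suc j)"
    and \<theta>_step: "\<And>j. \<theta> (Suc j) - \<theta> j < pi"
    and \<theta>_period: "\<And>j. \<theta> (j + N) = \<theta> j + 2 * pi"
    and \<theta>_0: "\<theta> 0 = 0"
    and X_period: "\<And>j. X (j + N) = X j"
    and X_support: "\<And>i j. inner (dir (\<theta> j)) (X i) \<le> inner (dir (\<theta> j)) (X j)"
begin

definition edge :: "nat \<Rightarrow> real^2" where
  "edge j = X (Suc j) - X j"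

lemma edge_period: "edge (j + N) = edge j"
  using X_period[of j] X_period[of "Suc j"] by (simp add: edge_def)

lemma \<theta>_mono: "i \<le> j \<Longrightarrow> \<theta> i \<le> \<theta> j"
  using \<theta>_less_Suc by (simp add: strict_mono_Suc_iff strict_mono_less_eq)

lemma \<theta>_less: "i < j \<Longrightarrow> \<theta> i < \<theta> j"
  using \<theta>_less_Suc by (simp add: strict_mono_Suc_iff strict_mono_less)

lemma inner_edge_nonneg:
  assumes "\<psi> - pi \<le> \<theta> j" "\<theta> (Suc j) \<le> \<psi>"
  shows "0 \<le> inner (dir \<psi>) (edge j)"
proof -
  have "inner (dir \<psi>) (X j) \<le> inner (dir \<psi>) (X (Suc j))"
    by (rule inner_dir_le_between[OF _ _ _ _ X_support X_support])
      (use \<theta>_less_Suc[of j] \<theta>_step[of j] assms in auto)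
  then show ?thesis
    by (simp add: edge_def inner_diff_right)
qed

lemma inner_edge_nonpos:
  assumes "\<psi> \<le> \<theta> j" "\<theta> (Suc j) \<le> \<psi> + pi"
  shows "inner (dir \<psi>) (edge j) \<le> 0"
proof -
  have "inner (dir \<psi>) (X (Suc j)) \<le> inner (dir \<psi>) (X j)"
    by (rule inner_dir_le_opposite[OF _ _ _ _ X_support X_support])
      (use \<theta>_less_Suc[of j] \<theta>_step[of j] assms in auto)
  then show ?thesis
    by (simp add: edge_def inner_diff_right)
qed

text \<open>With \<open>a\<close> the first index whose direction reaches \<open>\<psi> - \<pi>\<close> and \<open>b\<close> the first one reaching
  \<open>\<psi>\<close>, the edges from \<open>a\<close> to \<open>b - 2\<close> advance in direction \<open>\<psi>\<close> and those from \<open>b\<close> to \<open>a + N - 2\<close>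
  retreat; the sign of \<open>edge (b - 1)\<close> decides where the sign change is placed.\<close>

lemma edge_sign_pattern:
  assumes "pi \<le> \<psi>" "\<psi> < 3 * pi"
  obtains a c where "a \<le> N" "a \<le> c"
    "\<And>j. a \<le> j \<Longrightarrow> j < c \<Longrightarrow> 0 \<le> inner (dir \<psi>) (edge j)"
    "\<And>j. c \<le> j \<Longrightarrow> j < a + N - 1 \<Longrightarrow> inner (dir \<psi>) (edge j) \<le> 0"
proof -
  have \<theta>_N: "\<theta> N = 2 * pi"
    using \<theta>_period[of 0] \<theta>_0 by simp
  define a where "a = (LEAST j. \<psi> - pi \<le> \<theta> j)"
  define b where "b = (LEAST j. \<psi> \<le> \<theta> j)"
  have "\<psi> - pi \<le> \<theta> N"
    using \<theta>_N assms by simp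
  then have a: "\<psi> - pi \<le> \<theta> a" "a \<le> N"
    unfolding a_def by (auto intro: LeastI Least_le)
  have before_a: "\<theta> j < \<psi> - pi" if "j < a" for j
    using not_less_Least[of j "\<lambda>j. \<psi> - pi \<le> \<theta> j"] that by (auto simp: a_def)
  have "\<psi> \<le> \<theta> (a + N)"
    using \<theta>_period[of a] a(1) pi_gt_zero by linarith
  then have b: "\<psi> \<le> \<theta> b"
    unfolding b_def by (rule LeastI)
  have before_b: "\<theta> j < \<psi>" if "j < b" for j
    using not_less_Least[of j "\<lambda>j. \<psi> \<le> \<theta> j"] that by (auto simp: b_def)
  have "\<theta> a < \<psi>"
  proof (cases a)
    case (Suc a')
    then show ?thesis
      using before_a[of a'] \<theta>_step[of a'] by simp
  qed (use \<theta>_0 assms in simp)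
  then have "a < b"
    using b \<theta>_mono[of b a] by (cases "a < b") auto
  have last: "\<theta> (a + N - 1) < \<psi> + pi"
  proof (cases a)
    case 0
    then show ?thesis
      using \<theta>_less[of "N - 1" N] N_pos \<theta>_N assms by simp
  next
    case (Suc a')
    then show ?thesis
      using \<theta>_period[of a'] before_a[of a'] by simp
  qed
  have up: "0 \<le> inner (dir \<psi>) (edge j)" if "a \<le> j" "Suc j < b" for j
    using before_b[OF that(2)] a(1) \<theta>_mono[OF that(1)] by (intro inner_edge_nonneg) auto
  have down: "inner (dir \<psi>) (edge j) \<le> 0" if "b \<le> j" "j < a + N - 1" for j
    using b \<theta>_mono[OF that(1)] \<theta>_mono[of "Suc j" "a + N - 1"] last that
    by (intro inner_edge_nonpos) auto
  obtain c where "a \<le> c" "\<And>j. a \<le> j \<Longrightarrow> j < c \<Longrightarrow> 0 \<le> inner (dir \<psi>) (edge j)"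
    "\<And>j. c \<le> j \<Longrightarrow> j < a + N - 1 \<Longrightarrow> inner (dir \<psi>) (edge j) \<le> 0"
    using exists_sign_change_index[where f = "\<lambda>j. inner (dir \<psi>) (edge j)" and r = "a + N - 1",
        OF \<open>a < b\<close> up down] by blast
  with a(2) show thesis
    by (rule that)
qed

lemma inner_walk_le_sign_change:
  assumes m: "m \<in> closed_weights edge N" and "l < N" and "a \<le> N" "a \<le> c"
    and up: "\<And>j. a \<le> j \<Longrightarrow> j < c \<Longrightarrow> 0 \<le> inner w (edge j)"
    and down: "\<And>j. c \<le> j \<Longrightarrow> j < a + N - 1 \<Longrightarrow> inner w (edge j) \<le> 0"
  shows "inner w (walk edge m l) \<le> inner w (walk edge m (c mod N))"
proof -
  define f where "f j = m (j mod N) * inner w (edge j)" for j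
  have f_walk: "(\<Sum>j<l. f j) = inner w (walk edge m l)" if "l \<le> N" for l
    using that by (auto simp: f_def walk_def inner_sum_right intro!: sum.cong)
  have m_nonneg: "0 \<le> m (j mod N)" for j
    using m N_pos by (simp add: closed_weights_def)
  have "(\<Sum>j<l. f j) \<le> (\<Sum>j<c mod N. f j)"
  proof (rule sum_lessThan_le_periodic_unimodal)
    show "f (j + N) = f j" for j
      by (simp add: f_def edge_period)
    show "(\<Sum>j<N. f j) = 0"
      using m f_walk[of N] by (simp add: closed_weights_def)
    show "0 \<le> f j" if "a \<le> j" "j < c" for j
      using m_nonneg up[OF that] by (simp add: f_def)
    show "f j \<le> 0" if "c \<le> j" "j < a + N - 1" for j
      using m_nonneg down[OF that] by (simp add: f_def mult_nonneg_nonpos)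
  qed fact+
  then show ?thesis
    using f_walk[of l] f_walk[of "c mod N"] \<open>l < N\<close> N_pos by simp
qed

lemma uniform_support_edge: "uniform_support edge N"
  unfolding uniform_support_def
proof
  fix u :: "real^2"
  show "\<exists>l<N. \<forall>m\<in>closed_weights edge N. \<forall>l'<N. inner u (walk edge m l') \<le> inner u (walk edge m l)"
  proof (cases "u = 0")
    case True
    then show ?thesis
      using N_pos by auto
  next
    case False
    then obtain r t where r: "0 < r" and t: "0 \<le> t" "t < 2 * pi" and u: "u = r *\<^sub>R dir t"
      by (rule polar_decomposition)
    define \<psi> where "\<psi> = (if t < pi then t + 2 * pi else t)"
    have u: "u = r *\<^sub>R dir \<psi>"
      by (simp add: u \<psi>_def)
    have "pi \<le> \<psi>" "\<psi> < 3 * pi"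
      using t by (auto simp: \<psi>_def)
    then obtain a c where "a \<le> N" "a \<le> c"
      and "\<And>j. a \<le> j \<Longrightarrow> j < c \<Longrightarrow> 0 \<le> inner (dir \<psi>) (edge j)"
      and "\<And>j. c \<le> j \<Longrightarrow> j < a + N - 1 \<Longrightarrow> inner (dir \<psi>) (edge j) \<le> 0"
      using edge_sign_pattern by blast
    then have "inner (dir \<psi>) (walk edge m l') \<le> inner (dir \<psi>) (walk edge m (c mod N))"
      if "m \<in> closed_weights edge N" "l' < N" for m l'
      using that by (intro inner_walk_le_sign_change)
    then show ?thesis
      using r N_pos by (intro exI[of _ "c mod N"]) (auto simp: u)
  qed
qed

end

section \<open>Linear algebra on cones of weights\<close>

lemma exists_nontrivial_linear_relation:
  fixes D :: "'i \<Rightarrow> 'a::euclidean_space"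
  assumes "finite L" "DIM('a) < card L"
  obtains c :: "'i \<Rightarrow> real" where "\<exists>l\<in>L. c l \<noteq> 0" "(\<Sum>l\<in>L. c l *\<^sub>R D l) = 0"
proof (cases "inj_on D L")
  case True
  then have "dependent (D ` L)"
    using assms by (intro dependent_biggerset) (simp add: card_image)
  then obtain u where u: "\<exists>v\<in>D ` L. u v \<noteq> 0" "(\<Sum>v\<in>D ` L. u v *\<^sub>R v) = 0"
    using dependent_finite[of "D ` L"] assms by auto
  moreover have "(\<Sum>l\<in>L. u (D l) *\<^sub>R D l) = (\<Sum>v\<in>D ` L. u v *\<^sub>R v)"
    using sum.reindex[OF True, of "\<lambda>v. u v *\<^sub>R v"] by simp
  ultimately show thesis
    by (intro that[of "\<lambda>l. u (D l)"]) auto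
next
  case False
  then obtain l1 l2 where l: "l1 \<in> L" "l2 \<in> L" "l1 \<noteq> l2" "D l1 = D l2"
    unfolding inj_on_def by blast
  define c :: "'i \<Rightarrow> real" where "c l = (if l = l1 then 1 else if l = l2 then -1 else 0)" for l
  have "(\<Sum>l\<in>L. c l *\<^sub>R D l) = (\<Sum>l\<in>{l1, l2}. c l *\<^sub>R D l)"
    using l assms by (intro sum.mono_neutral_right) (auto simp: c_def)
  also have "\<dots> = 0"
    using l by (simp add: c_def)
  finally show thesis
    using l by (intro that[of c]) (auto simp: c_def)
qed

text \<open>Every \<open>e l\<close> with \<open>l \<in> S - B\<close> is a combination of a basis \<open>e ` B\<close> of \<open>span (e ` S)\<close>;
  the coefficients of this relation give a kernel vector supported on \<open>insert l B\<close>.\<close>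

lemma kernel_vectors_over_basis:
  fixes e :: "'i \<Rightarrow> 'a::euclidean_space"
  assumes "finite I" "S \<subseteq> I"
  obtains B where "B \<subseteq> S" "card B \<le> DIM('a)"
    "\<And>l. l \<in> S - B \<Longrightarrow>
       \<exists>\<delta>. \<delta> l = 1 \<and> (\<forall>j. j \<notin> insert l B \<longrightarrow> \<delta> j = 0) \<and> (\<Sum>j\<in>I. \<delta> j *\<^sub>R e j) = 0"
proof -
  obtain B0 where "B0 \<subseteq> e ` S" "independent B0" "e ` S \<subseteq> span B0"
    by (rule maximal_independent_subset)
  moreover obtain B where B: "B \<subseteq> S" "inj_on e B" "B0 = e ` B"
    using \<open>B0 \<subseteq> e ` S\<close> unfolding subset_image_inj by blast
  ultimately have span: "e ` S \<subseteq> span (e ` B)" and indep: "independent (e ` B)"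
    by blast+
  have finB: "finite B"
    using B(1) assms by (meson finite_subset)
  have "\<exists>\<delta>. \<delta> l = 1 \<and> (\<forall>j. j \<notin> insert l B \<longrightarrow> \<delta> j = 0) \<and> (\<Sum>j\<in>I. \<delta> j *\<^sub>R e j) = 0"
    if l: "l \<in> S - B" for l
  proof -
    have "e l \<in> span (e ` B)"
      using span l by auto
    then obtain u where "e l = (\<Sum>v\<in>e ` B. u v *\<^sub>R v)"
      using span_finite[of "e ` B"] finB by auto
    also have "\<dots> = (\<Sum>j\<in>B. u (e j) *\<^sub>R e j)"
      using sum.reindex[OF B(2), of "\<lambda>v. u v *\<^sub>R v"] by simp
    finally have el: "e l = (\<Sum>j\<in>B. u (e j) *\<^sub>R e j)" .
    define \<delta> where "\<delta> j = (if j = l then 1 else 0) - (if j \<in> B then u (e j) else 0)" for j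
    have "\<delta> j *\<^sub>R e j = (if j = l then e j else 0) - (if j \<in> B then u (e j) *\<^sub>R e j else 0)" for j
      by (simp add: \<delta>_def scaleR_diff_left)
    then have "(\<Sum>j\<in>I. \<delta> j *\<^sub>R e j)
        = (\<Sum>j\<in>I. if j = l then e j else 0) - (\<Sum>j\<in>I. if j \<in> B then u (e j) *\<^sub>R e j else 0)"
      by (simp add: sum_subtractf)
    also have "\<dots> = e l - (\<Sum>j\<in>I \<inter> B. u (e j) *\<^sub>R e j)"
      using l assms by (simp add: sum.inter_restrict subset_iff)
    also have "\<dots> = 0"
      using B assms el by (simp add: Int_absorb1 order_trans)
    finally show ?thesis
      using l by (intro exI[of _ \<delta>]) (auto simp: \<delta>_def)
  qed
  moreover have "card B \<le> DIM('a)"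
    using independent_bound[OF indep] card_image[OF B(2)] by simp
  ultimately show thesis
    using B by (intro that) auto
qed

lemma exists_pos_perturbation_nonneg:
  fixes m \<delta> :: "'i \<Rightarrow> real"
  assumes "finite F" "\<And>j. j \<in> F \<Longrightarrow> 0 < m j"
  shows "\<exists>t>0. \<forall>j\<in>F. 0 \<le> m j + t * \<delta> j"
proof -
  define t where "t = Min (insert 1 ((\<lambda>j. m j / (\<bar>\<delta> j\<bar> + 1)) ` F))"
  have "0 < t"
    using assms by (simp add: t_def add_pos_nonneg)
  moreover have "0 \<le> m j + t * \<delta> j" if "j \<in> F" for j
  proof -
    have "t \<le> m j / (\<bar>\<delta> j\<bar> + 1)"
      using assms that by (simp add: t_def)
    then have "t * (\<bar>\<delta> j\<bar> + 1) \<le> m j"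
      by (simp add: pos_le_divide_eq add_pos_nonneg)
    moreover have "- (t * \<delta> j) \<le> t * \<bar>\<delta> j\<bar>"
      using \<open>0 < t\<close> abs_ge_minus_self[of "t * \<delta> j"] by (simp add: abs_mult)
    ultimately show ?thesis
      using \<open>0 < t\<close> by (simp add: algebra_simps)
  qed
  ultimately show ?thesis
    by blast
qed

lemma sum_mult_diagonal_nonzero:
  fixes c :: "'i \<Rightarrow> real"
  assumes "finite L" "l0 \<in> L" "c l0 \<noteq> 0" "v l0 l0 \<noteq> 0" "\<And>l. l \<in> L \<Longrightarrow> l \<noteq> l0 \<Longrightarrow> v l l0 = 0"
  shows "(\<Sum>l\<in>L. c l * v l l0) \<noteq> 0"
proof -
  have "(\<Sum>l\<in>L. c l * v l l0) = c l0 * v l0 l0 + (\<Sum>l\<in>L - {l0}. c l * v l l0)"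
    using assms(1,2) by (simp add: sum.remove)
  also have "(\<Sum>l\<in>L - {l0}. c l * v l l0) = 0"
    using assms(5) by simp
  finally show ?thesis
    using assms(3,4) by simp
qed

lemma exists_vanishing_step_neg:
  fixes m d :: "'i \<Rightarrow> real"
  assumes S: "finite S" "\<And>j. j \<in> S \<Longrightarrow> 0 \<le> m j" and neg: "j1 \<in> S" "d j1 < 0"
  shows "\<exists>s. \<exists>j0\<in>S. d j0 \<noteq> 0 \<and> m j0 + s * d j0 = 0 \<and> (\<forall>j\<in>S. 0 \<le> m j + s * d j)"
proof -
  define F where "F = {j\<in>S. d j < 0}"
  have F: "finite F" "F \<noteq> {}"
    using S(1) neg by (auto simp: F_def)
  define s where "s = Min ((\<lambda>j. m j / - d j) ` F)"
  have "s \<in> (\<lambda>j. m j / - d j) ` F"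
    unfolding s_def using F by (intro Min_in) auto
  then obtain j0 where j0: "j0 \<in> F" "s = m j0 / - d j0"
    by blast
  have "0 \<le> m j + s * d j" if "j \<in> S" for j
  proof (cases "d j < 0")
    case True
    then have "s \<le> m j / - d j"
      using F that by (auto simp: s_def F_def)
    moreover have "0 < - d j"
      using True by simp
    ultimately have "s * - d j \<le> m j"
      using pos_le_divide_eq by blast
    then show ?thesis
      by simp
  next
    case False
    moreover have "0 \<le> s"
      using j0 S(2) by (auto simp: F_def divide_nonneg_neg)
    ultimately show ?thesis
      using S(2)[OF that] by simp
  qed
  moreover have "m j0 + s * d j0 = 0"
    using j0 by (auto simp: F_def)
  ultimately show ?thesis
    using j0(1) by (intro exI[of _ s] bexI[of _ j0]) (auto simp: F_def)
qed

lemma exists_vanishing_step: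
  fixes m d :: "'i \<Rightarrow> real"
  assumes S: "finite S" "\<And>j. j \<in> S \<Longrightarrow> 0 \<le> m j" and "j1 \<in> S" "d j1 \<noteq> 0"
  shows "\<exists>s. \<exists>j0\<in>S. d j0 \<noteq> 0 \<and> m j0 + s * d j0 = 0 \<and> (\<forall>j\<in>S. 0 \<le> m j + s * d j)"
proof (cases "d j1 < 0")
  case True
  then show ?thesis
    using exists_vanishing_step_neg[where m = m and d = d, OF S \<open>j1 \<in> S\<close>] by blast
next
  case False
  then have "(- d) j1 < 0"
    using \<open>d j1 \<noteq> 0\<close> by simp
  then obtain s where "\<exists>j0\<in>S. (- d) j0 \<noteq> 0 \<and> m j0 + s * (- d) j0 = 0 \<and> (\<forall>j\<in>S. 0 \<le> m j + s * (- d) j)"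
    using exists_vanishing_step_neg[where m = m and d = "- d", OF S \<open>j1 \<in> S\<close>] by blast
  then show ?thesis
    by (intro exI[of _ "- s"]) simp
qed

lemma additive_on_cone_sum:
  fixes g :: "('i \<Rightarrow> real) \<Rightarrow> 'b::real_vector"
  assumes comb: "\<And>x y a b. x \<in> C \<Longrightarrow> y \<in> C \<Longrightarrow> 0 \<le> a \<Longrightarrow> 0 \<le> b \<Longrightarrow>
      (\<lambda>j. a * x j + b * y j) \<in> C \<and> g (\<lambda>j. a * x j + b * y j) = a *\<^sub>R g x + b *\<^sub>R g y"
    and "finite L" "y \<in> C" "\<And>l. l \<in> L \<Longrightarrow> z l \<in> C"
  shows "(\<lambda>j. y j + (\<Sum>l\<in>L. z l j)) \<in> C \<and> g (\<lambda>j. y j + (\<Sum>l\<in>L. z l j)) = g y + (\<Sum>l\<in>L. g (z l))"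
  using assms(2-4)
proof (induction L rule: finite_induct)
  case (insert l L)
  let ?w = "\<lambda>j. y j + (\<Sum>l\<in>L. z l j)"
  have "?w \<in> C" "g ?w = g y + (\<Sum>l\<in>L. g (z l))" "z l \<in> C"
    using insert by auto
  moreover have "(\<lambda>j. y j + (\<Sum>l\<in>insert l L. z l j)) = (\<lambda>j. 1 * ?w j + 1 * z l j)"
    using insert by (simp add: add_ac)
  ultimately show ?case
    using comb[of ?w "z l" 1 1] insert by (simp add: add_ac)
qed simp

text \<open>Split the coefficients into positive and negative parts and move the negative parts to the
  other side of the equation; then only nonnegative combinations of points of the cone occur.\<close>

lemma additive_on_cone_affine:
  fixes g :: "('i \<Rightarrow> real) \<Rightarrow> 'b::real_vector"
  assumes comb: "\<And>x y a b. x \<in> C \<Longrightarrow> y \<in> C \<Longrightarrow> 0 \<le> a \<Longrightarrow> 0 \<le> b \<Longrightarrow>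
      (\<lambda>j. a * x j + b * y j) \<in> C \<and> g (\<lambda>j. a * x j + b * y j) = a *\<^sub>R g x + b *\<^sub>R g y"
    and L: "finite L" and x: "x \<in> C" and v: "\<And>l. l \<in> L \<Longrightarrow> (\<lambda>j. x j + v l j) \<in> C"
    and w: "(\<lambda>j. x j + (\<Sum>l\<in>L. c l * v l j)) \<in> C"
  shows "g (\<lambda>j. x j + (\<Sum>l\<in>L. c l * v l j)) = g x + (\<Sum>l\<in>L. c l *\<^sub>R (g (\<lambda>j. x j + v l j) - g x))"
proof -
  define p where "p l = max (c l) 0" for l
  define n where "n l = max (- c l) 0" for l
  have pn: "0 \<le> p l" "0 \<le> n l" "p l - n l = c l" for l
    by (auto simp: p_def n_def)
  let ?w = "\<lambda>j. x j + (\<Sum>l\<in>L. c l * v l j)"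
  let ?y = "\<lambda>l j. x j + v l j"
  define z1 where "z1 l = (\<lambda>j. n l * ?y l j + p l * x j)" for l
  define z2 where "z2 l = (\<lambda>j. p l * ?y l j + n l * x j)" for l
  have z1: "z1 l \<in> C" "g (z1 l) = n l *\<^sub>R g (?y l) + p l *\<^sub>R g x" if "l \<in> L" for l
    using comb[OF v[OF that] x pn(2) pn(1)] by (simp_all add: z1_def)
  have z2: "z2 l \<in> C" "g (z2 l) = p l *\<^sub>R g (?y l) + n l *\<^sub>R g x" if "l \<in> L" for l
    using comb[OF v[OF that] x pn(1) pn(2)] by (simp_all add: z2_def)
  have "c l * v l j + z1 l j = z2 l j" for l j
    unfolding z1_def z2_def pn(3)[of l, symmetric] by (simp add: algebra_simps)
  then have split: "(\<lambda>j. ?w j + (\<Sum>l\<in>L. z1 l j)) = (\<lambda>j. x j + (\<Sum>l\<in>L. z2 l j))"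
    by (simp add: add.assoc flip: sum.distrib)
  have "g ?w + (\<Sum>l\<in>L. g (z1 l)) = g (\<lambda>j. ?w j + (\<Sum>l\<in>L. z1 l j))"
    by (rule additive_on_cone_sum[OF comb L w z1(1), THEN conjunct2, symmetric])
  also have "\<dots> = g (\<lambda>j. x j + (\<Sum>l\<in>L. z2 l j))"
    by (simp only: split)
  also have "\<dots> = g x + (\<Sum>l\<in>L. g (z2 l))"
    by (rule additive_on_cone_sum[OF comb L x z2(1), THEN conjunct2])
  finally have "g ?w = g x + (\<Sum>l\<in>L. g (z2 l)) - (\<Sum>l\<in>L. g (z1 l))"
    by (simp add: eq_diff_eq)
  also have "\<dots> = g x + (\<Sum>l\<in>L. g (z2 l) - g (z1 l))"
    by (simp add: sum_subtractf)
  also have "(\<Sum>l\<in>L. g (z2 l) - g (z1 l)) = (\<Sum>l\<in>L. c l *\<^sub>R (g (?y l) - g x))"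
  proof (rule sum.cong)
    fix l assume "l \<in> L"
    then have "g (z2 l) - g (z1 l) = (p l - n l) *\<^sub>R (g (?y l) - g x)"
      using z1 z2 by (simp add: scaleR_diff_left scaleR_diff_right)
    then show "g (z2 l) - g (z1 l) = c l *\<^sub>R (g (?y l) - g x)"
      by (simp only: pn(3))
  qed simp
  finally show ?thesis .
qed

section \<open>Reducing the number of edges\<close>

locale additive_walk_hull =
  fixes \<phi> :: "(real^2) set \<Rightarrow> real^'k" and e :: "nat \<Rightarrow> real^2" and N :: nat
  assumes additive: "additive_on_bodies \<phi>"
    and N_pos: "0 < N"
    and uniform: "uniform_support e N"
begin

definition hull_value :: "(nat \<Rightarrow> real) \<Rightarrow> real^'k" where
  "hull_value m = \<phi> (walk_hull e N m)"

lemma walk_hull_in_convex_bodies: "walk_hull e N m \<in> convex_bodies"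
  using N_pos by (auto simp: convex_bodies_def walk_hull_def compact_convex_hull finite_imp_compact)

lemma hull_value_lincomb:
  assumes "m \<in> closed_weights e N" "m' \<in> closed_weights e N" "0 \<le> a" "0 \<le> b"
  shows "(\<lambda>j. a * m j + b * m' j) \<in> closed_weights e N \<and>
    hull_value (\<lambda>j. a * m j + b * m' j) = a *\<^sub>R hull_value m + b *\<^sub>R hull_value m'"
  using assms closed_weights_lincomb walk_hull_lincomb[OF uniform assms] additive
    walk_hull_in_convex_bodies
  by (simp add: hull_value_def additive_on_bodies_def)

lemma hull_value_affine:
  assumes "finite L" "m \<in> closed_weights e N" "\<And>l. l \<in> L \<Longrightarrow> (\<lambda>j. m j + v l j) \<in> closed_weights e N"
    and "(\<lambda>j. m j + (\<Sum>l\<in>L. c l * v l j)) \<in> closed_weights e N"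
  shows "hull_value (\<lambda>j. m j + (\<Sum>l\<in>L. c l * v l j))
    = hull_value m + (\<Sum>l\<in>L. c l *\<^sub>R (hull_value (\<lambda>j. m j + v l j) - hull_value m))"
  using hull_value_lincomb assms by (intro additive_on_cone_affine[where C = "closed_weights e N"])

lemma scaled_kernel_vectors:
  assumes m: "m \<in> closed_weights e N"
  defines "S \<equiv> weight_support N m"
  obtains B v where "B \<subseteq> S" "card B \<le> 2"
    "\<And>l. l \<in> S - B \<Longrightarrow> v l l \<noteq> 0"
    "\<And>l j. l \<in> S - B \<Longrightarrow> j \<notin> insert l B \<Longrightarrow> v l j = 0"
    "\<And>l. l \<in> S - B \<Longrightarrow> (\<lambda>j. m j + v l j) \<in> closed_weights e N"
proof -
  have S: "finite S" "S \<subseteq> {..<N}" "\<And>j. j \<in> S \<Longrightarrow> 0 < m j"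
    using m by (force simp: S_def weight_support_def closed_weights_def)+
  obtain B where B: "B \<subseteq> S" "card B \<le> 2"
    and "\<And>l. l \<in> S - B \<Longrightarrow>
       \<exists>\<delta>. \<delta> l = 1 \<and> (\<forall>j. j \<notin> insert l B \<longrightarrow> \<delta> j = 0) \<and> (\<Sum>j<N. \<delta> j *\<^sub>R e j) = 0"
    using kernel_vectors_over_basis[of "{..<N}" S e] S by auto
  then obtain \<delta> where \<delta>: "\<And>l. l \<in> S - B \<Longrightarrow>
      \<delta> l l = 1 \<and> (\<forall>j. j \<notin> insert l B \<longrightarrow> \<delta> l j = 0) \<and> walk e (\<delta> l) N = 0"
    unfolding walk_def by metis
  have "\<exists>t>0. \<forall>j\<in>insert l B. 0 \<le> m j + t * \<delta> l j" if "l \<in> S - B" for l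
  proof -
    have "finite (insert l B)"
      using finite_subset[OF B(1) S(1)] by simp
    moreover have "0 < m j" if "j \<in> insert l B" for j
      using B(1) S(3) \<open>l \<in> S - B\<close> that by auto
    ultimately show ?thesis
      by (rule exists_pos_perturbation_nonneg)
  qed
  then obtain t where t: "\<And>l. l \<in> S - B \<Longrightarrow> 0 < t l \<and> (\<forall>j\<in>insert l B. 0 \<le> m j + t l * \<delta> l j)"
    by metis
  define v where "v l j = t l * \<delta> l j" for l j
  show thesis
  proof (rule that[OF B, of v])
    fix l assume l: "l \<in> S - B"
    show "v l l \<noteq> 0"
      using t[OF l] \<delta>[OF l] by (simp add: v_def)
    show "v l j = 0" if "j \<notin> insert l B" for j
      using \<delta>[OF l] that by (simp add: v_def)
    have "0 \<le> m j + v l j" if "j < N" for j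
      using t[OF l] \<delta>[OF l] m that by (cases "j \<in> insert l B") (auto simp: v_def closed_weights_def)
    moreover have "walk e (\<lambda>j. 1 * m j + t l * \<delta> l j) N = 0"
      using m \<delta>[OF l] by (simp only: walk_lincomb) (simp add: closed_weights_def)
    ultimately show "(\<lambda>j. m j + v l j) \<in> closed_weights e N"
      by (simp add: closed_weights_def v_def)
  qed
qed

text \<open>With at least \<open>CARD('k) + 3\<close> active edges, \<open>CARD('k) + 1\<close> of the kernel directions
  above have linearly dependent effects on \<open>hull_value\<close>; the corresponding combination \<open>d\<close>
  of them does not change \<open>hull_value\<close> at all.\<close>

lemma invariant_direction:
  assumes m: "m \<in> closed_weights e N" and card: "CARD('k) + 3 \<le> card (weight_support N m)"
  obtains d where "\<And>j. j \<notin> weight_support N m \<Longrightarrow> d j = 0" "\<exists>j. d j \<noteq> 0" "walk e d N = 0"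
    "\<And>s. (\<lambda>j. m j + s * d j) \<in> closed_weights e N \<Longrightarrow> hull_value (\<lambda>j. m j + s * d j) = hull_value m"
proof -
  let ?S = "weight_support N m"
  obtain B v where B: "B \<subseteq> ?S" "card B \<le> 2"
    and v_diag: "\<And>l. l \<in> ?S - B \<Longrightarrow> v l l \<noteq> 0"
    and v_zero: "\<And>l j. l \<in> ?S - B \<Longrightarrow> j \<notin> insert l B \<Longrightarrow> v l j = 0"
    and v_closed: "\<And>l. l \<in> ?S - B \<Longrightarrow> (\<lambda>j. m j + v l j) \<in> closed_weights e N"
    using scaled_kernel_vectors[OF m] by blast
  have finS: "finite ?S"
    by (simp add: weight_support_def)
  have "CARD('k) + 1 \<le> card (?S - B)"
    using card B card_Diff_subset[OF finite_subset[OF B(1) finS] B(1)] by linarith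
  then obtain L where L: "L \<subseteq> ?S - B" "card L = CARD('k) + 1" "finite L"
    by (rule obtain_subset_with_card_n)
  obtain c where c: "\<exists>l\<in>L. c l \<noteq> 0"
    and c_rel: "(\<Sum>l\<in>L. c l *\<^sub>R (hull_value (\<lambda>j. m j + v l j) - hull_value m)) = 0"
    using exists_nontrivial_linear_relation[of L "\<lambda>l. hull_value (\<lambda>j. m j + v l j) - hull_value m"] L
    by auto
  define d where "d j = (\<Sum>l\<in>L. c l * v l j)" for j
  show thesis
  proof (rule that[of d])
    show "d j = 0" if "j \<notin> ?S" for j
    proof -
      have "v l j = 0" if "l \<in> L" for l
        using v_zero[of l j] L(1) B(1) \<open>j \<notin> ?S\<close> that by blast
      then show ?thesis
        unfolding d_def by simp
    qed
    obtain l0 where l0: "l0 \<in> L" "c l0 \<noteq> 0"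
      using c by blast
    have "v l l0 = 0" if "l \<in> L" "l \<noteq> l0" for l
      using v_zero[of l l0] L(1) l0(1) that by blast
    then have "d l0 \<noteq> 0"
      unfolding d_def using L l0 v_diag by (intro sum_mult_diagonal_nonzero) auto
    then show "\<exists>j. d j \<noteq> 0"
      by blast
    have "walk e (v l) N = 0" if "l \<in> L" for l
      using v_closed[of l] m L that walk_lincomb[of e 1 m 1 "v l" N]
      by (auto simp: closed_weights_def)
    then show "walk e d N = 0"
      by (simp add: d_def[abs_def] walk_sum_lincomb)
    fix s assume closed: "(\<lambda>j. m j + s * d j) \<in> closed_weights e N"
    have "(\<lambda>j. m j + s * d j) = (\<lambda>j. m j + (\<Sum>l\<in>L. (s * c l) * v l j))"
      by (simp add: d_def sum_distrib_left mult.assoc)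
    moreover have "hull_value (\<lambda>j. m j + (\<Sum>l\<in>L. (s * c l) * v l j))
        = hull_value m + (\<Sum>l\<in>L. (s * c l) *\<^sub>R (hull_value (\<lambda>j. m j + v l j) - hull_value m))"
      using L m v_closed closed calculation by (intro hull_value_affine) auto
    ultimately show "hull_value (\<lambda>j. m j + s * d j) = hull_value m"
      using c_rel by (simp flip: scaleR_scaleR scaleR_sum_right)
  qed
qed

lemma support_reduction:
  assumes m: "m \<in> closed_weights e N" and card: "CARD('k) + 3 \<le> card (weight_support N m)"
  obtains m' where "m' \<in> closed_weights e N" "weight_support N m' \<subset> weight_support N m"
    "hull_value m' = hull_value m"
proof -
  let ?S = "weight_support N m"
  obtain d where d_zero: "\<And>j. j \<notin> ?S \<Longrightarrow> d j = 0" and "\<exists>j. d j \<noteq> 0" and d_walk: "walk e d N = 0"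
    and d_inv: "\<And>s. (\<lambda>j. m j + s * d j) \<in> closed_weights e N \<Longrightarrow>
      hull_value (\<lambda>j. m j + s * d j) = hull_value m"
    using invariant_direction[OF m card] by blast
  then obtain j1 where "j1 \<in> ?S" "d j1 \<noteq> 0"
    by blast
  moreover have "finite ?S" "\<And>j. j \<in> ?S \<Longrightarrow> 0 \<le> m j"
    using m by (auto simp: weight_support_def closed_weights_def)
  ultimately obtain s j0 where j0: "j0 \<in> ?S" "m j0 + s * d j0 = 0"
    and nonneg: "\<forall>j\<in>?S. 0 \<le> m j + s * d j"
    using exists_vanishing_step[of ?S m j1 d] by blast
  define m' where "m' j = m j + s * d j" for j
  have "0 \<le> m' j" if "j < N" for j
    using nonneg d_zero[of j] m that by (cases "j \<in> ?S") (auto simp: m'_def closed_weights_def)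
  moreover have "walk e m' N = 0"
    using m d_walk walk_lincomb[of e 1 m s d N] by (simp add: m'_def[abs_def] closed_weights_def)
  ultimately have m': "m' \<in> closed_weights e N"
    by (simp add: closed_weights_def)
  moreover have "weight_support N m' \<subset> ?S"
  proof -
    have "weight_support N m' \<subseteq> ?S"
      using d_zero by (auto simp: weight_support_def m'_def)
    moreover have "j0 \<notin> weight_support N m'"
      using j0 by (simp add: weight_support_def m'_def)
    ultimately show ?thesis
      using j0 by blast
  qed
  moreover have "hull_value m' = hull_value m"
    using d_inv m' by (simp add: m'_def[abs_def])
  ultimately show thesis
    by (rule that)
qed

lemma support_card_reduction:
  assumes "m \<in> closed_weights e N"
  obtains m' where "m' \<in> closed_weights e N" "card (weight_support N m') \<le> CARD('k) + 2"
    "hull_value m' = hull_value m"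
  using assms
proof (induction "card (weight_support N m)" arbitrary: m rule: less_induct)
  case less
  show ?case
  proof (cases "card (weight_support N m) \<le> CARD('k) + 2")
    case True
    then show ?thesis
      using less.prems by blast
  next
    case False
    then have "CARD('k) + 3 \<le> card (weight_support N m)"
      by linarith
    then obtain m' where m': "m' \<in> closed_weights e N" "weight_support N m' \<subset> weight_support N m"
      "hull_value m' = hull_value m"
      using support_reduction[OF less.prems(2)] by blast
    have "card (weight_support N m') < card (weight_support N m)"
      using m'(2) by (intro psubset_card_mono) (simp_all add: weight_support_def)
    with m' show ?thesis
      using less.hyps less.prems(1) by metis
  qed
qed

lemma walk_card_reduction:
  assumes "m \<in> closed_weights e N"
  obtains m' where "m' \<in> closed_weights e N" "card (walk e m' ` {..<N}) \<le> CARD('k) + 2"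
    "hull_value m' = hull_value m"
proof -
  obtain m' where m': "m' \<in> closed_weights e N" "card (weight_support N m') \<le> CARD('k) + 2"
    "hull_value m' = hull_value m"
    using support_card_reduction[OF assms] by blast
  then have "card (walk e m' ` {..<N}) \<le> CARD('k) + 2"
    using card_walk_image_le[OF m'(1)] by simp
  with m' show thesis
    using that by blast
qed

end

section \<open>Polygons\<close>

definition periodic_angles :: "real list \<Rightarrow> nat \<Rightarrow> real" where
  "periodic_angles ts j = ts ! (j mod length ts) + 2 * pi * real (j div length ts)"

lemma sorted_anchored_angles:
  assumes Th: "finite Th" "Th \<subseteq> {0..<2 * pi}"
    and anchors: "0 \<in> Th" "2 * pi / 3 \<in> Th" "4 * pi / 3 \<in> Th"
  defines "ts \<equiv> sorted_list_of_set Th"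
  shows "ts ! 0 = 0" "2 * pi - ts ! (length ts - 1) \<le> 2 * pi / 3"
    "\<And>i. Suc i < length ts \<Longrightarrow> ts ! i < ts ! Suc i \<and> ts ! Suc i \<le> ts ! i + 2 * pi / 3"
proof -
  define N where "N = length ts"
  have set_ts: "set ts = Th"
    using Th by (simp add: ts_def)
  have less: "ts ! i < ts ! j" if "i < j" "j < N" for i j
    using sorted_wrt_nth_less[of "(<)" ts i j] that by (simp add: N_def ts_def)
  have le: "ts ! i \<le> ts ! j" if "i \<le> j" "j < N" for i j
    using less[of i j] that by (cases "i = j") auto
  have range: "0 \<le> ts ! i" "ts ! i < 2 * pi" if "i < N" for i
    using nth_mem[of i ts] that Th set_ts by (auto simp: N_def)
  have index: "\<exists>i<N. ts ! i = t" if "t \<in> Th" for t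
    using that set_ts in_set_conv_nth[of t ts] by (auto simp: N_def)
  have "0 < N"
    using set_ts anchors by (auto simp: N_def)
  show "ts ! 0 = 0"
    using index[OF anchors(1)] le[of 0] range[of 0] \<open>0 < N\<close> by force
  obtain i where "i < N" "ts ! i = 4 * pi / 3"
    using index[OF anchors(3)] by blast
  moreover from this have "ts ! i \<le> ts ! (N - 1)"
    by (intro le) auto
  ultimately show "2 * pi - ts ! (length ts - 1) \<le> 2 * pi / 3"
    by (simp add: N_def)
  show "ts ! i < ts ! Suc i \<and> ts ! Suc i \<le> ts ! i + 2 * pi / 3" if "Suc i < length ts" for i
  proof
    show "ts ! i < ts ! Suc i"
      using less that by (simp add: N_def)
    show "ts ! Suc i \<le> ts ! i + 2 * pi / 3"
    proof (cases "ts ! i < 4 * pi / 3")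
      case True
      define a where "a = (if ts ! i < 2 * pi / 3 then 2 * pi / 3 else 4 * pi / 3)"
      have a: "a \<in> Th" "ts ! i < a" "a \<le> ts ! i + 2 * pi / 3"
        using True anchors range[of i] that by (auto simp: a_def N_def)
      then obtain k where k: "k < N" "ts ! k = a"
        using index by blast
      then have "i < k"
        using le[of k i] that a(2) by (cases "i < k") (auto simp: N_def)
      then show ?thesis
        using le[of "Suc i" k] k a by simp
    next
      case False
      then show ?thesis
        using range[of "Suc i"] that by (simp add: N_def)
    qed
  qed
qed

lemma periodic_angles_support_sequence:
  assumes Th: "finite Th" "Th \<subseteq> {0..<2 * pi}"
    and anchors: "0 \<in> Th" "2 * pi / 3 \<in> Th" "4 * pi / 3 \<in> Th"
  defines "ts \<equiv> sorted_list_of_set Th"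
  shows "0 < length ts" "periodic_angles ts ` {..<length ts} = Th"
    "\<And>j. periodic_angles ts j < periodic_angles ts (Suc j)"
    "\<And>j. periodic_angles ts (Suc j) - periodic_angles ts j < pi"
    "\<And>j. periodic_angles ts (j + length ts) = periodic_angles ts j + 2 * pi"
    "periodic_angles ts 0 = 0"
proof -
  define N where "N = length ts"
  note sorted = sorted_anchored_angles[OF assms(1-5), folded ts_def N_def]
  have set_ts: "set ts = Th"
    using Th by (simp add: ts_def)
  show "0 < length ts"
    using set_ts anchors by auto
  then have "0 < N"
    by (simp add: N_def)
  have "0 < periodic_angles ts (Suc j) - periodic_angles ts j
      \<and> periodic_angles ts (Suc j) - periodic_angles ts j \<le> 2 * pi / 3" for j
  proof (cases "Suc (j mod N) = N")
    case True
    then have "Suc j mod N = 0" "Suc j div N = Suc (j div N)" "j mod N = N - 1"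
      by (simp_all add: mod_Suc div_Suc)
    then have "periodic_angles ts (Suc j) - periodic_angles ts j = 2 * pi - ts ! (N - 1)"
      using sorted(1) by (simp add: periodic_angles_def N_def[symmetric] algebra_simps)
    moreover have "ts ! (N - 1) < 2 * pi"
      using nth_mem[of "N - 1" ts] \<open>0 < N\<close> set_ts Th by (auto simp: N_def)
    ultimately show ?thesis
      using sorted(2) by simp
  next
    case False
    moreover have "j mod N < N"
      using \<open>0 < N\<close> by simp
    ultimately have "Suc j mod N = Suc (j mod N)" "Suc j div N = j div N" "Suc (j mod N) < N"
      by (simp_all add: mod_Suc div_Suc)
    then show ?thesis
      using sorted(3)[of "j mod N"] by (simp add: periodic_angles_def N_def[symmetric])
  qed
  note step = this
  show "periodic_angles ts j < periodic_angles ts (Suc j)" for j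
    using step[of j] by simp
  show "periodic_angles ts (Suc j) - periodic_angles ts j < pi" for j
    using step[of j] pi_gt_zero by linarith
  show "\<And>j. periodic_angles ts (j + length ts) = periodic_angles ts j + 2 * pi"
    using \<open>0 < N\<close> by (simp add: periodic_angles_def N_def[symmetric] algebra_simps)
  show "periodic_angles ts 0 = 0"
    using sorted(1) by (simp add: periodic_angles_def)
  have "periodic_angles ts ` {..<N} = set ts"
    by (auto simp: periodic_angles_def N_def[symmetric] in_set_conv_nth image_iff)
  then show "periodic_angles ts ` {..<length ts} = Th"
    using set_ts by (simp add: N_def)
qed

lemma polygon_vertices:
  assumes "P \<in> polygons"
  shows "finite (vertices P)" "vertices P \<noteq> {}" "P = convex hull (vertices P)"
proof -
  obtain T where T: "P = convex hull T" "finite T" "T \<noteq> {}"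
    using assms by (auto simp: polygons_def)
  have "vertices P \<subseteq> T"
    using T extreme_point_of_convex_hull by (auto simp: vertices_def)
  then show "finite (vertices P)"
    using T(2) finite_subset by blast
  have "compact P" "convex P"
    using T by (simp_all add: compact_convex_hull finite_imp_compact)
  then show hull: "P = convex hull (vertices P)"
    unfolding vertices_def by (rule Krein_Milman_Minkowski)
  then show "vertices P \<noteq> {}"
    using T by auto
qed

lemma vertex_exposing_dir:
  assumes P: "P \<in> polygons" and v: "v \<in> vertices P"
  shows "\<exists>t. 0 \<le> t \<and> t < 2 * pi \<and>
    (\<forall>x\<in>vertices P. x \<noteq> v \<longrightarrow> inner (dir t) x < inner (dir t) v)"
proof (cases "vertices P - {v} = {}")
  case True
  then show ?thesis
    by (intro exI[of _ 0]) auto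
next
  case False
  let ?E = "vertices P - {v}"
  have "finite ?E"
    using polygon_vertices(1)[OF P] by simp
  have "convex P"
    using P by (auto simp: polygons_def)
  moreover have "v extreme_point_of P"
    using v by (simp add: vertices_def)
  ultimately have "convex (P - {v})"
    by (simp add: extreme_point_of_stillconvex)
  moreover have "?E \<subseteq> P - {v}"
    by (auto simp: vertices_def extreme_point_of_def)
  ultimately have "v \<notin> convex hull ?E"
    using hull_minimal[of ?E "P - {v}" convex] by blast
  moreover have "closed (convex hull ?E)"
    using \<open>finite ?E\<close> by (simp add: compact_imp_closed compact_convex_hull finite_imp_compact)
  ultimately obtain a b where ab: "inner a v < b" "\<And>x. x \<in> convex hull ?E \<Longrightarrow> b < inner a x"
    using separating_hyperplane_closed_point[OF convex_convex_hull] by blast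
  have "a \<noteq> 0"
    using False ab hull_inc[of _ ?E] by fastforce
  then obtain r t where r: "0 < r" and t: "0 \<le> t" "t < 2 * pi" and a: "- a = r *\<^sub>R dir t"
    using polar_decomposition[of "- a"] by auto
  have "inner (dir t) x < inner (dir t) v" if "x \<in> vertices P" "x \<noteq> v" for x
  proof -
    have "inner (- a) x < inner (- a) v"
      using ab hull_inc[of x ?E] that by fastforce
    then show ?thesis
      using r by (simp add: a)
  qed
  with t show ?thesis
    by blast
qed

lemma exists_support_point_fun:
  fixes E :: "'a::real_inner set"
  assumes "finite E" "E \<noteq> {}"
  shows "\<exists>Y. \<forall>u. Y u \<in> E \<and> (\<forall>z\<in>E. inner u z \<le> inner u (Y u))"
proof -
  have "\<exists>y\<in>E. \<forall>z\<in>E. inner u z \<le> inner u y" for u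
  proof -
    have "Max ((\<lambda>z. inner u z) ` E) \<in> (\<lambda>z. inner u z) ` E"
      using assms by (intro Max_in) auto
    then obtain y where "y \<in> E" "inner u y = Max ((\<lambda>z. inner u z) ` E)"
      by auto
    then show ?thesis
      using assms(1) by (metis Max_ge finite_imageI image_eqI)
  qed
  then show ?thesis
    by metis
qed

lemma walk_telescope: "walk (\<lambda>j. X (Suc j) - X j) (\<lambda>_. 1) l = X l - X 0"
  by (simp add: walk_def sum_lessThan_telescope)

lemma polygon_translate_walk_hull:
  assumes "P \<in> polygons"
  obtains x0 e N where "0 < N" "uniform_support e N" "(\<lambda>_. 1) \<in> closed_weights e N"
    "P = (+) x0 ` walk_hull e N (\<lambda>_. 1)"
proof -
  define E where "E = vertices P"
  note E = polygon_vertices[OF assms, folded E_def]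
  obtain \<tau> where \<tau>: "\<And>v. v \<in> E \<Longrightarrow> 0 \<le> \<tau> v \<and> \<tau> v < 2 * pi \<and>
      (\<forall>x\<in>E. x \<noteq> v \<longrightarrow> inner (dir (\<tau> v)) x < inner (dir (\<tau> v)) v)"
    using vertex_exposing_dir[OF assms] unfolding E_def by metis
  txt \<open>The anchor directions keep consecutive sampled directions less than \<open>\<pi>\<close> apart.\<close>
  define Th where "Th = \<tau> ` E \<union> {0, 2 * pi / 3, 4 * pi / 3}"
  have Th: "finite Th" "Th \<subseteq> {0..<2 * pi}" "0 \<in> Th" "2 * pi / 3 \<in> Th" "4 * pi / 3 \<in> Th"
    using E(1) \<tau> by (auto simp: Th_def)
  define N where "N = length (sorted_list_of_set Th)"
  define \<theta> where "\<theta> = periodic_angles (sorted_list_of_set Th)"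
  note angles = periodic_angles_support_sequence[OF Th, folded N_def \<theta>_def]
  obtain X0 where X0: "\<And>u. X0 u \<in> E" "\<And>u z. z \<in> E \<Longrightarrow> inner u z \<le> inner u (X0 u)"
    using exists_support_point_fun[OF E(1,2)] by metis
  define X where "X j = X0 (dir (\<theta> j))" for j
  interpret support_sequence N \<theta> X
    using angles X0 by unfold_locales (auto simp: X_def)
  have "X ` {..<N} = E"
  proof
    show "X ` {..<N} \<subseteq> E"
      using X0 by (auto simp: X_def)
    show "E \<subseteq> X ` {..<N}"
    proof
      fix v assume v: "v \<in> E"
      then have "\<tau> v \<in> \<theta> ` {..<N}"
        using angles(2) by (simp add: Th_def)
      then obtain i where i: "i < N" "\<theta> i = \<tau> v"
        by (metis imageE lessThan_iff)
      have "X0 (dir (\<tau> v)) = v"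
        using \<tau>[OF v] X0(1)[of "dir (\<tau> v)"] X0(2)[OF v, of "dir (\<tau> v)"] by (meson not_less)
      then have "X i = v"
        by (simp add: X_def i(2))
      with i show "v \<in> X ` {..<N}"
        by blast
    qed
  qed
  show thesis
  proof (rule that[of N edge "X 0"])
    show "0 < N" "uniform_support edge N"
      by (rule N_pos uniform_support_edge)+
    show "(\<lambda>_. 1) \<in> closed_weights edge N"
      using X_period[of 0] by (simp add: closed_weights_def edge_def[abs_def] walk_telescope)
    have "(+) (X 0) ` walk_hull edge N (\<lambda>_. 1) = convex hull ((+) (X 0) ` (\<lambda>l. X l - X 0) ` {..<N})"
      by (simp add: walk_hull_def edge_def[abs_def] walk_telescope convex_hull_translation)
    also have "(+) (X 0) ` (\<lambda>l. X l - X 0) ` {..<N} = X ` {..<N}"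
      by (simp add: image_image)
    finally show "P = (+) (X 0) ` walk_hull edge N (\<lambda>_. 1)"
      using E(3) \<open>X ` {..<N} = E\<close> by simp
  qed
qed

lemma additive_translate:
  assumes "additive_on_bodies \<phi>" "K \<in> convex_bodies"
  shows "\<phi> ((+) x ` K) = \<phi> {x} + \<phi> K"
proof -
  have "(+) x ` K = mink_comb 1 {x} 1 K"
    by (auto simp: mink_comb_def)
  moreover have "{x} \<in> convex_bodies"
    by (simp add: convex_bodies_def)
  ultimately show ?thesis
    using assms by (simp add: additive_on_bodies_def)
qed

lemma polygon_value_reduction:
  fixes \<phi> :: "(real^2) set \<Rightarrow> real^'k"
  assumes additive: "additive_on_bodies \<phi>" and P: "P \<in> polygons"
  obtains Q where "Q \<in> polygons_le (3 * CARD('k))" "\<phi> Q = \<phi> P"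
proof -
  obtain x0 e N where "0 < N" "uniform_support e N" and one: "(\<lambda>_. 1) \<in> closed_weights e N"
    and P_eq: "P = (+) x0 ` walk_hull e N (\<lambda>_. 1)"
    by (rule polygon_translate_walk_hull[OF P])
  interpret additive_walk_hull \<phi> e N
    by unfold_locales fact+
  obtain m where "m \<in> closed_weights e N" and card: "card (walk e m ` {..<N}) \<le> CARD('k) + 2"
    and same_value: "hull_value m = hull_value (\<lambda>_. 1)"
    by (rule walk_card_reduction[OF one])
  define Q where "Q = (+) x0 ` walk_hull e N m"
  have Q_hull: "Q = convex hull ((+) x0 ` walk e m ` {..<N})"
    by (simp add: Q_def walk_hull_def convex_hull_translation)
  then have "Q \<in> polygons"
    using \<open>0 < N\<close> by (auto simp: polygons_def)
  moreover have "card (vertices Q) \<le> 3 * CARD('k)"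
  proof -
    have "vertices Q \<subseteq> (+) x0 ` walk e m ` {..<N}"
      unfolding Q_hull vertices_def using extreme_point_of_convex_hull by blast
    then have "card (vertices Q) \<le> card ((+) x0 ` walk e m ` {..<N})"
      by (intro card_mono) auto
    also have "\<dots> \<le> card (walk e m ` {..<N})"
      by (intro card_image_le) simp
    finally have "card (vertices Q) \<le> card (walk e m ` {..<N})" .
    moreover have "0 < CARD('k)"
      by (simp add: card_gt_0_iff)
    ultimately show ?thesis
      using card by linarith
  qed
  moreover have "\<phi> Q = \<phi> P"
    using same_value additive_translate[OF additive walk_hull_in_convex_bodies]
    by (simp add: Q_def P_eq hull_value_def)
  ultimately show thesis
    by (intro that[of Q]) (simp_all add: polygons_le_def)
qed

lemma polygons_subset_convex_bodies: "polygons \<subseteq> convex_bodies"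
  by (auto simp: polygons_def convex_bodies_def compact_convex_hull finite_imp_compact)

lemma exists_polygon_hausdorff_dist_less:
  assumes K: "K \<in> convex_bodies" and "0 < d"
  obtains Q where "Q \<in> polygons" "hausdorff_dist K Q < d"
proof -
  have K: "compact K" "convex K" "K \<noteq> {}"
    using K by (auto simp: convex_bodies_def)
  obtain F where F: "F \<subseteq> K" "finite F" "K \<subseteq> (\<Union>x\<in>F. ball x (d / 2))"
    using compactE_image[OF K(1), of K "\<lambda>x. ball x (d / 2)"] \<open>0 < d\<close> by force
  define Q where "Q = convex hull F"
  have "F \<noteq> {}"
    using F(3) K(3) by auto
  then have "Q \<in> polygons" "Q \<noteq> {}"
    using F(2) by (auto simp: polygons_def Q_def)
  have "Q \<subseteq> K"
    unfolding Q_def using F(1) K(2) by (intro hull_minimal)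
  have "(SUP a\<in>K. infdist a Q) \<le> d / 2"
  proof (rule cSUP_least)
    fix a assume "a \<in> K"
    then obtain f where "f \<in> F" "dist f a < d / 2"
      using F(3) by auto
    moreover have "f \<in> Q"
      using \<open>f \<in> F\<close> by (auto simp: Q_def intro: hull_inc)
    ultimately show "infdist a Q \<le> d / 2"
      using infdist_le[of f Q a] by (simp add: dist_commute)
  qed (use K in simp)
  moreover have "(SUP b\<in>Q. infdist b K) \<le> 0"
    using \<open>Q \<subseteq> K\<close> \<open>Q \<noteq> {}\<close> by (intro cSUP_least) auto
  ultimately have "hausdorff_dist K Q < d"
    using \<open>0 < d\<close> by (simp add: hausdorff_dist_def)
  with \<open>Q \<in> polygons\<close> show thesis
    by (rule that)
qed

lemma convex_bodies_image_subset_closure_polygons: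
  assumes "hausdorff_continuous \<phi>"
  shows "\<phi> ` convex_bodies \<subseteq> closure (\<phi> ` polygons)"
proof
  fix y assume "y \<in> \<phi> ` convex_bodies"
  then obtain K where K: "K \<in> convex_bodies" "y = \<phi> K"
    by auto
  show "y \<in> closure (\<phi> ` polygons)"
    unfolding closure_approachable
  proof (intro allI impI)
    fix \<epsilon> :: real assume "0 < \<epsilon>"
    then obtain d where "0 < d"
      and d: "\<And>L. L \<in> convex_bodies \<Longrightarrow> hausdorff_dist K L < d \<Longrightarrow> dist (\<phi> L) (\<phi> K) < \<epsilon>"
      using assms K(1) unfolding hausdorff_continuous_def by blast
    obtain Q where "Q \<in> polygons" "hausdorff_dist K Q < d"
      using exists_polygon_hausdorff_dist_less[OF K(1) \<open>0 < d\<close>] by blast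
    then show "\<exists>z\<in>\<phi> ` polygons. dist z y < \<epsilon>"
      using d polygons_subset_convex_bodies K(2) by blast
  qed
qed

theorem mainTheorem15:
  fixes \<phi> :: "(real^2) set \<Rightarrow> real^'k"
  assumes "additive_on_bodies \<phi>"
  shows "\<phi> ` polygons = \<phi> ` polygons_le (3 * CARD('k))
     \<and> (hausdorff_continuous \<phi> \<longrightarrow>
          closure (\<phi> ` convex_bodies) = closure (\<phi> ` polygons_le (3 * CARD('k))))"
proof
  have "polygons_le (3 * CARD('k)) \<subseteq> polygons"
    by (auto simp: polygons_le_def)
  moreover have "\<phi> ` polygons \<subseteq> \<phi> ` polygons_le (3 * CARD('k))"
    using polygon_value_reduction[OF assms] by (metis image_eqI image_subsetI)
  ultimately show polygons_eq: "\<phi> ` polygons = \<phi> ` polygons_le (3 * CARD('k))"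
    by blast
  show "hausdorff_continuous \<phi> \<longrightarrow>
      closure (\<phi> ` convex_bodies) = closure (\<phi> ` polygons_le (3 * CARD('k)))"
  proof
    assume "hausdorff_continuous \<phi>"
    then have "closure (\<phi> ` convex_bodies) \<subseteq> closure (\<phi> ` polygons)"
      by (intro closure_minimal convex_bodies_image_subset_closure_polygons) simp_all
    moreover have "closure (\<phi> ` polygons) \<subseteq> closure (\<phi> ` convex_bodies)"
      using polygons_subset_convex_bodies by (intro closure_mono image_mono)
    ultimately show "closure (\<phi> ` convex_bodies) = closure (\<phi> ` polygons_le (3 * CARD('k)))"
      unfolding polygons_eq by blast
  qed
qed

end
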